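(* Consider $k\ge 2$ arms. For each arm $j$, $n_j\ge 1$ samples with values in $[0,1]$ have been observed, with sample mean $\overline X_j^{n_j}\in[0,1]$. Let $\alpha$ be an arm with the largest sample mean and $\beta$ an arm with the second largest sample mean, i.e. $\overline X_\alpha^{n_\alpha}\ge \overline X_\beta^{n_\beta}\ge \overline X_j^{n_j}$ for all $j\ne\alpha$. Fix an integer $N\ge 1$ and an arm $i$, and let $Y_1,\dots,Y_N$ be random variables with values in $[0,1]$ (the next $N$ samples of arm $i$). Define the updated sample mean of arm $i$ as $$\overline X_i^{n_i+N}=\frac{n_i\overline X_i^{n_i}+\sum_{t=1}^N Y_t}{n_i+N},$$ while the sample means of all other arms are unchanged. Let $\Lambda_i^b$ be the blinkered intrinsic value of information of testing arm $i$ $N$ times (defined in the context). Then $$\Lambda_\alpha^b\le \frac{N\,\overline X_\beta^{n_\beta}}{n_\alpha}\,\Pr\!\left(\overline X_\alpha^{n_\alpha+N}\le \overline X_\beta^{n_\beta}\right),$$ and for every $i\ne\alpha$, $$\Lambda_i^b\le \frac{N\,(1-\overline X_\alpha^{n_\alpha})}{n_i}\,\Pr\!\left(\overline X_i^{n_i+N}\ge \overline X_\alpha^{n_\alpha}\right).$$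
   Context: Setting: a selection problem among arms, where samples of each arm take values in $[0,1]$ and the estimated value of an arm is its sample mean; after sampling stops, the arm with the greatest sample mean is selected. Currently the selected arm is $\alpha$. For a test consisting of $N$ additional samples of arm $i$, let $m_j'$ denote the sample mean of arm $j$ after the test (so $m_i'=\overline X_i^{n_i+N}$ and $m_j'=\overline X_j^{n_j}$ for $j\ne i$). The blinkered intrinsic value of information is the expected improvement, measured by the updated estimates, of the best arm after the test over the currently selected arm $\alpha$: $$\Lambda_i^b=\mathbb E\!\left[\max_j m_j' - m_\alpha'\right].$$ In particular $\Lambda_\alpha^b=\mathbb E[(\overline X_\beta^{n_\beta}-\overline X_\alpha^{n_\alpha+N})^+]$ and, for $i\ne\alpha$, $\Lambda_i^b=\mathbb E[(\overline X_i^{n_i+N}-\overline X_\alpha^{n_\alpha})^+]$. Probabilities and expectations are over the random future samples $Y_1,\dots,Y_N$. *)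

theory Defs
  imports "HOL-Probability.Probability"
begin

text \<open>Arms are indexed by 0..<k.  n j = number of samples of arm j, xbar j = its sample mean.
  A test of arm i with N further samples y 1, ..., y N gives updated estimates:\<close>
definition upd_mean ::
  "(nat \<Rightarrow> nat) \<Rightarrow> (nat \<Rightarrow> real) \<Rightarrow> nat \<Rightarrow> nat \<Rightarrow> (nat \<Rightarrow> real) \<Rightarrow> nat \<Rightarrow> real" where
  "upd_mean n xbar N i y j =
     (if j = i then (real (n i) * xbar i + (\<Sum>t\<in>{1..N}. y t)) / real (n i + N) else xbar j)"

definition blinkered_voi ::
  "'w measure \<Rightarrow> nat \<Rightarrow> (nat \<Rightarrow> nat) \<Rightarrow> (nat \<Rightarrow> real) \<Rightarrow> nat \<Rightarrow> nat \<Rightarrow> nat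
     \<Rightarrow> (nat \<Rightarrow> 'w \<Rightarrow> real) \<Rightarrow> real" where
  "blinkered_voi M k n xbar alpha N i Y =
     (\<integral>\<omega>. (Max ((\<lambda>j. upd_mean n xbar N i (\<lambda>t. Y t \<omega>) j) ` {..<k})
            - upd_mean n xbar N i (\<lambda>t. Y t \<omega>) alpha) \<partial>M)"

end

theory Submission
  imports Defs
begin

(* The gain  Max_j m'_j - m'_alpha  is bounded pointwise, for every outcome of the
   test, by a constant times the indicator of the event in which the test can
   change the selection; integrating this bound gives the theorem. *)

lemma integral_le_const_prob:
  fixes f :: "'w \<Rightarrow> real"
  assumes M: "finite_measure M"
    and S: "{\<omega> \<in> space M. P \<omega>} \<in> sets M" and c: "0 \<le> c"
    and bound: "\<And>\<omega>. \<omega> \<in> space M \<Longrightarrow> f \<omega> \<le> (if P \<omega> then c else 0)"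
  shows "integral\<^sup>L M f \<le> c * measure M {\<omega> \<in> space M. P \<omega>}"
proof (cases "integrable M f")
  case True
  interpret finite_measure M by (rule M)
  let ?S = "{\<omega> \<in> space M. P \<omega>}"
  have ind_int: "integrable M (\<lambda>\<omega>. c * indicator ?S \<omega> :: real)"
    using S by (intro integrable_mult_right integrable_real_indicator) (simp_all add: less_top[symmetric])
  have "integral\<^sup>L M f \<le> integral\<^sup>L M (\<lambda>\<omega>. c * indicator ?S \<omega>)"
  proof (rule integral_mono[OF True ind_int])
    fix \<omega> assume "\<omega> \<in> space M"
    then show "f \<omega> \<le> c * indicator ?S \<omega>"
      using bound[of \<omega>] by (cases "P \<omega>") auto
  qed
  also have "\<dots> = c * measure M ?S"
    using S by simp
  finally show ?thesis .
next
  case False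
  then show ?thesis
    using c by (simp add: not_integrable_integral_eq)
qed

lemma upd_mean_self_measurable:
  assumes "\<And>t. t \<in> {1..N} \<Longrightarrow> Y t \<in> borel_measurable M"
  shows "(\<lambda>\<omega>. upd_mean n xbar N i (\<lambda>t. Y t \<omega>) i) \<in> borel_measurable M"
  using assms unfolding upd_mean_def by simp

lemma upd_mean_other [simp]: "j \<noteq> i \<Longrightarrow> upd_mean n xbar N i y j = xbar j"
  by (simp add: upd_mean_def)

lemma sum_samples_bounds:
  fixes y :: "nat \<Rightarrow> real"
  assumes "\<And>t. t \<in> {1..N} \<Longrightarrow> 0 \<le> y t \<and> y t \<le> 1"
  shows "0 \<le> (\<Sum>t\<in>{1..N}. y t)" and "(\<Sum>t\<in>{1..N}. y t) \<le> real N"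
proof -
  show "0 \<le> (\<Sum>t\<in>{1..N}. y t)"
    using assms by (intro sum_nonneg) auto
  have "(\<Sum>t\<in>{1..N}. y t) \<le> (\<Sum>t\<in>{1..N}. 1)"
    using assms by (intro sum_mono) auto
  then show "(\<Sum>t\<in>{1..N}. y t) \<le> real N" by simp
qed

lemma upd_mean_self_bounds:
  fixes y :: "nat \<Rightarrow> real"
  assumes "\<And>t. t \<in> {1..N} \<Longrightarrow> 0 \<le> y t \<and> y t \<le> 1"
  shows "real (n i) * xbar i / real (n i + N) \<le> upd_mean n xbar N i y i"
    and "upd_mean n xbar N i y i \<le> (real (n i) * xbar i + real N) / real (n i + N)"
  using sum_samples_bounds[OF assms]
  by (simp_all add: upd_mean_def divide_right_mono)

lemma Max_upd_mean_le:
  assumes "0 < k" and "\<And>j. j < k \<Longrightarrow> j \<noteq> i \<Longrightarrow> xbar j \<le> b"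
  shows "Max ((\<lambda>j. upd_mean n xbar N i y j) ` {..<k}) \<le> max (upd_mean n xbar N i y i) b"
proof (rule Max.boundedI)
  show "finite ((\<lambda>j. upd_mean n xbar N i y j) ` {..<k})" by simp
  show "(\<lambda>j. upd_mean n xbar N i y j) ` {..<k} \<noteq> {}" using assms(1) by auto
next
  fix v assume "v \<in> (\<lambda>j. upd_mean n xbar N i y j) ` {..<k}"
  then obtain j where "j < k" "v = upd_mean n xbar N i y j" by auto
  then show "v \<le> max (upd_mean n xbar N i y i) b"
    using assms(2) by (cases "j = i") (simp_all add: le_max_iff_disj)
qed

lemma gain_tested_best_le:
  fixes m b x :: real and n N :: nat
  assumes n: "1 \<le> n" and b: "0 \<le> b" "b \<le> x" and m: "real n * x / real (n + N) \<le> m"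
  shows "max m b - m \<le> (if m \<le> b then real N * b / real n else 0)"
proof -
  have "real n * b / real (n + N) \<le> real n * x / real (n + N)"
    using b by (intro divide_right_mono mult_left_mono) auto
  moreover have "b - real n * b / real (n + N) = real N * b / real (n + N)"
    using n by (simp add: field_simps)
  moreover have "real N * b / real (n + N) \<le> real N * b / real n"
    using n b by (intro divide_left_mono) auto
  ultimately show ?thesis
    using m by auto
qed

lemma gain_tested_other_le:
  fixes m a x :: real and n N :: nat
  assumes n: "1 \<le> n" and a: "a \<le> 1" "x \<le> a"
    and m: "m \<le> (real n * x + real N) / real (n + N)"
  shows "max m a - a \<le> (if a \<le> m then real N * (1 - a) / real n else 0)"
proof -
  have "(real n * x + real N) / real (n + N) \<le> (real n * a + real N) / real (n + N)"
    using a by (intro divide_right_mono) (auto intro: mult_left_mono)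
  moreover have "(real n * a + real N) / real (n + N) - a = real N * (1 - a) / real (n + N)"
    using n by (simp add: field_simps)
  moreover have "real N * (1 - a) / real (n + N) \<le> real N * (1 - a) / real n"
    using n a by (intro divide_left_mono) auto
  ultimately show ?thesis
    using m by auto
qed

lemma voi_tested_best_bound:
  assumes M: "finite_measure M"
    and alpha: "alpha < k" and n_alpha: "1 \<le> n alpha"
    and b: "0 \<le> xbar beta" "xbar beta \<le> xbar alpha"
    and beta_bound: "\<And>j. j < k \<Longrightarrow> j \<noteq> alpha \<Longrightarrow> xbar j \<le> xbar beta"
    and Y_meas: "\<And>t. t \<in> {1..N} \<Longrightarrow> Y t \<in> borel_measurable M"
    and Y_range: "\<And>t \<omega>. t \<in> {1..N} \<Longrightarrow> \<omega> \<in> space M \<Longrightarrow> 0 \<le> Y t \<omega> \<and> Y t \<omega> \<le> 1"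
  shows "blinkered_voi M k n xbar alpha N alpha Y
           \<le> real N * xbar beta / real (n alpha) *
             measure M {\<omega> \<in> space M. upd_mean n xbar N alpha (\<lambda>t. Y t \<omega>) alpha \<le> xbar beta}"
  unfolding blinkered_voi_def
proof (rule integral_le_const_prob[OF M])
  show "{\<omega> \<in> space M. upd_mean n xbar N alpha (\<lambda>t. Y t \<omega>) alpha \<le> xbar beta} \<in> sets M"
    using upd_mean_self_measurable[OF Y_meas] by measurable
  show "0 \<le> real N * xbar beta / real (n alpha)"
    using b by simp
next
  fix \<omega> assume \<omega>: "\<omega> \<in> space M"
  let ?m = "upd_mean n xbar N alpha (\<lambda>t. Y t \<omega>) alpha"
  have "Max ((\<lambda>j. upd_mean n xbar N alpha (\<lambda>t. Y t \<omega>) j) ` {..<k}) - ?m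
      \<le> max ?m (xbar beta) - ?m"
    using Max_upd_mean_le[of k alpha xbar "xbar beta"] alpha beta_bound by simp
  also have "\<dots> \<le> (if ?m \<le> xbar beta then real N * xbar beta / real (n alpha) else 0)"
  proof (rule gain_tested_best_le[OF n_alpha b])
    show "real (n alpha) * xbar alpha / real (n alpha + N) \<le> ?m"
      by (rule upd_mean_self_bounds(1)) (rule Y_range[OF _ \<omega>])
  qed
  finally show "Max ((\<lambda>j. upd_mean n xbar N alpha (\<lambda>t. Y t \<omega>) j) ` {..<k}) - ?m
      \<le> (if ?m \<le> xbar beta then real N * xbar beta / real (n alpha) else 0)" .
qed

lemma voi_tested_other_bound:
  assumes M: "finite_measure M"
    and alpha: "alpha < k" and i_k: "i < k" and i: "i \<noteq> alpha" and n_i: "1 \<le> n i"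
    and a_le_1: "xbar alpha \<le> 1"
    and alpha_bound: "\<And>j. j < k \<Longrightarrow> xbar j \<le> xbar alpha"
    and Y_meas: "\<And>t. t \<in> {1..N} \<Longrightarrow> Y t \<in> borel_measurable M"
    and Y_range: "\<And>t \<omega>. t \<in> {1..N} \<Longrightarrow> \<omega> \<in> space M \<Longrightarrow> 0 \<le> Y t \<omega> \<and> Y t \<omega> \<le> 1"
  shows "blinkered_voi M k n xbar alpha N i Y
           \<le> real N * (1 - xbar alpha) / real (n i) *
             measure M {\<omega> \<in> space M. upd_mean n xbar N i (\<lambda>t. Y t \<omega>) i \<ge> xbar alpha}"
  unfolding blinkered_voi_def
proof (rule integral_le_const_prob[OF M])
  show "{\<omega> \<in> space M. upd_mean n xbar N i (\<lambda>t. Y t \<omega>) i \<ge> xbar alpha} \<in> sets M"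
    using upd_mean_self_measurable[OF Y_meas] by measurable
  show "0 \<le> real N * (1 - xbar alpha) / real (n i)"
    using a_le_1 by simp
next
  fix \<omega> assume \<omega>: "\<omega> \<in> space M"
  let ?m = "upd_mean n xbar N i (\<lambda>t. Y t \<omega>) i"
  have "Max ((\<lambda>j. upd_mean n xbar N i (\<lambda>t. Y t \<omega>) j) ` {..<k})
        - upd_mean n xbar N i (\<lambda>t. Y t \<omega>) alpha
      \<le> max ?m (xbar alpha) - xbar alpha"
    using Max_upd_mean_le[of k i xbar "xbar alpha"] alpha alpha_bound i by simp
  also have "\<dots> \<le> (if xbar alpha \<le> ?m then real N * (1 - xbar alpha) / real (n i) else 0)"
  proof (rule gain_tested_other_le[OF n_i a_le_1 alpha_bound[OF i_k]])
    show "?m \<le> (real (n i) * xbar i + real N) / real (n i + N)"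
      by (rule upd_mean_self_bounds(2)) (rule Y_range[OF _ \<omega>])
  qed
  finally show "Max ((\<lambda>j. upd_mean n xbar N i (\<lambda>t. Y t \<omega>) j) ` {..<k})
        - upd_mean n xbar N i (\<lambda>t. Y t \<omega>) alpha
      \<le> (if xbar alpha \<le> ?m then real N * (1 - xbar alpha) / real (n i) else 0)" .
qed

theorem mainTheorem1:
  fixes M :: "'w measure" and k N :: nat and n :: "nat \<Rightarrow> nat" and xbar :: "nat \<Rightarrow> real"
    and alpha beta :: nat and Y :: "nat \<Rightarrow> 'w \<Rightarrow> real"
  assumes P: "prob_space M"
    and k2: "k \<ge> 2"
    and n_pos: "\<And>j. j < k \<Longrightarrow> n j \<ge> 1"
    and xbar_range: "\<And>j. j < k \<Longrightarrow> 0 \<le> xbar j \<and> xbar j \<le> 1"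
    and alpha: "alpha < k" and beta: "beta < k" and ab: "alpha \<noteq> beta"
    and alpha_best: "xbar alpha \<ge> xbar beta"
    and beta_second: "\<And>j. j < k \<Longrightarrow> j \<noteq> alpha \<Longrightarrow> xbar beta \<ge> xbar j"
    and N1: "N \<ge> 1"
    and Y_meas: "\<And>t. t \<in> {1..N} \<Longrightarrow> Y t \<in> borel_measurable M"
    and Y_range: "\<And>t \<omega>. t \<in> {1..N} \<Longrightarrow> \<omega> \<in> space M \<Longrightarrow> 0 \<le> Y t \<omega> \<and> Y t \<omega> \<le> 1"
  shows "blinkered_voi M k n xbar alpha N alpha Y
           \<le> real N * xbar beta / real (n alpha) *
             measure M {\<omega> \<in> space M. upd_mean n xbar N alpha (\<lambda>t. Y t \<omega>) alpha \<le> xbar beta}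
         \<and> (\<forall>i<k. i \<noteq> alpha \<longrightarrow>
           blinkered_voi M k n xbar alpha N i Y
           \<le> real N * (1 - xbar alpha) / real (n i) *
             measure M {\<omega> \<in> space M. upd_mean n xbar N i (\<lambda>t. Y t \<omega>) i \<ge> xbar alpha})"
proof -
  have M: "finite_measure M"
    using P by (rule prob_space.finite_measure)
  have alpha_max: "xbar j \<le> xbar alpha" if "j < k" for j
    using that alpha_best beta_second[of j] by (cases "j = alpha") auto
  have beta_nonneg: "0 \<le> xbar beta" and alpha_le_1: "xbar alpha \<le> 1"
    using xbar_range[OF beta] xbar_range[OF alpha] by simp_all
  show ?thesis
  proof (intro conjI allI impI)
    show "blinkered_voi M k n xbar alpha N alpha Y
           \<le> real N * xbar beta / real (n alpha) *
             measure M {\<omega> \<in> space M. upd_mean n xbar N alpha (\<lambda>t. Y t \<omega>) alpha \<le> xbar beta}"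
      using M alpha n_pos[OF alpha] beta_nonneg alpha_best beta_second Y_meas Y_range
      by (rule voi_tested_best_bound)
  next
    fix i assume i: "i < k" "i \<noteq> alpha"
    show "blinkered_voi M k n xbar alpha N i Y
           \<le> real N * (1 - xbar alpha) / real (n i) *
             measure M {\<omega> \<in> space M. upd_mean n xbar N i (\<lambda>t. Y t \<omega>) i \<ge> xbar alpha}"
      using M alpha i n_pos[OF i(1)] alpha_le_1 alpha_max Y_meas Y_range
      by (rule voi_tested_other_bound)
  qed
qed

end
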